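(* Let $X$ be a finite set with $n=|X|$, let $r\ge 2$, and let $\tau$ be a non-empty subset of $\binom{X}{r}$ with $L(\tau)=X$. If $\tau$ is thin, then: (i) $|\tau|\le n-r+1$; (ii) there exists $x\in X$ with $n_\tau(x)\le r-1$; (iii) for any subset $B\subseteq X$ with $|B|=r-1$, the (multi)collection of sets $\{S-B : S\in\tau\}$ has a system of distinct representatives.
   Context: $\binom{X}{r}$ denotes the set of $r$-element subsets of $X$. For a collection $\tau$ of subsets of $X$, $L(\tau)=\bigcup_{s\in\tau}s$. For $\tau\subseteq\binom{X}{r}$ non-empty, the excess is ${\rm exc}(\tau)=|L(\tau)|-|\tau|-(r-1)$, and $\tau$ is thin if ${\rm exc}(\tau')\ge 0$ for every non-empty $\tau'\subseteq\tau$. For $x\in X$, $n_\tau(x)$ is the number of sets in $\tau$ containing $x$. A collection of (not necessarily distinct) sets $B_1,\dots,B_m$ has a system of distinct representatives if one can choose $x_i\in B_i$ for each $i$ with $x_1,\dots,x_m$ pairwise distinct. *)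

theory Defs
  imports Main
begin

definition r_subsets :: "'a set \<Rightarrow> nat \<Rightarrow> 'a set set" where
  "r_subsets X r = {S. S \<subseteq> X \<and> card S = r}"

definition L :: "'a set set \<Rightarrow> 'a set" where
  "L \<tau> = \<Union>\<tau>"

definition exc :: "nat \<Rightarrow> 'a set set \<Rightarrow> int" where
  "exc r \<tau> = int (card (L \<tau>)) - int (card \<tau>) - (int r - 1)"

definition thin :: "nat \<Rightarrow> 'a set set \<Rightarrow> bool" where
  "thin r \<tau> \<longleftrightarrow> (\<forall>\<tau>'. \<tau>' \<subseteq> \<tau> \<and> \<tau>' \<noteq> {} \<longrightarrow> exc r \<tau>' \<ge> 0)"

definition n_count :: "'a set set \<Rightarrow> 'a \<Rightarrow> nat" where
  "n_count \<tau> x = card {s \<in> \<tau>. x \<in> s}"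

text \<open>A family of (not necessarily distinct) sets indexed by I has an SDR.\<close>
definition has_sdr :: "'i set \<Rightarrow> ('i \<Rightarrow> 'a set) \<Rightarrow> bool" where
  "has_sdr I B \<longleftrightarrow> (\<exists>rep. inj_on rep I \<and> (\<forall>i\<in>I. rep i \<in> B i))"

end

theory Submission imports Defs begin

text \<open>
  Thinness of \<open>\<tau>\<close> itself gives (i). Double counting incidences, \<open>\<Sum>x. n(x) = r |\<tau>|\<close>,
  and since \<open>|\<tau>| < n\<close> by (i) some point lies in fewer than \<open>r\<close> sets, giving (ii).
  For (iii), thinness says every \<open>\<tau>' \<subseteq> \<tau>\<close> covers at least \<open>|\<tau>'| + r - 1\<close> points,
  so removing the \<open>r - 1\<close> points of \<open>B\<close> leaves at least \<open>|\<tau>'|\<close> of them: this is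
  Hall's condition, and Hall's marriage theorem provides the representatives.
\<close>

definition hall_condition :: "'i set \<Rightarrow> ('i \<Rightarrow> 'a set) \<Rightarrow> bool" where
  "hall_condition I A \<longleftrightarrow> (\<forall>J\<subseteq>I. card J \<le> card (\<Union>(A ` J)))"

lemma hall_condition_subset: "hall_condition I A \<Longrightarrow> J \<subseteq> I \<Longrightarrow> hall_condition J A"
  by (auto simp: hall_condition_def)

lemma has_sdr_Un:
  assumes "has_sdr J (\<lambda>i. A i \<inter> U)" and "has_sdr K (\<lambda>i. A i - U)"
  shows "has_sdr (J \<union> K) A"
proof -
  obtain r1 where r1: "inj_on r1 J" "\<forall>i\<in>J. r1 i \<in> A i \<inter> U"
    using assms(1) by (auto simp: has_sdr_def)
  obtain r2 where r2: "inj_on r2 K" "\<forall>i\<in>K. r2 i \<in> A i - U"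
    using assms(2) by (auto simp: has_sdr_def)
  define rep where "rep i = (if i \<in> J then r1 i else r2 i)" for i
  have "inj_on rep J" using r1(1) by (auto simp: rep_def inj_on_def)
  moreover have "inj_on rep (K - J)" using r2(1) by (auto simp: rep_def inj_on_def)
  moreover have "rep ` (J - (K - J)) \<inter> rep ` ((K - J) - J) = {}"
    using r1(2) r2(2) by (auto simp: rep_def)
  ultimately have "inj_on rep (J \<union> (K - J))" by (simp only: inj_on_Un)
  then have "inj_on rep (J \<union> K)" by simp
  moreover have "\<forall>i\<in>J \<union> K. rep i \<in> A i" using r1(2) r2(2) by (auto simp: rep_def)
  ultimately show ?thesis by (auto simp: has_sdr_def)
qed

lemma hall_condition_Diff_critical:
  assumes "finite I" and "\<forall>i\<in>I. finite (A i)" and "hall_condition I A"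
    and "J \<subseteq> I" and critical: "card (\<Union>(A ` J)) = card J"
  shows "hall_condition (I - J) (\<lambda>i. A i - \<Union>(A ` J))"
  unfolding hall_condition_def
proof (intro allI impI)
  fix K assume K: "K \<subseteq> I - J"
  have finK: "finite K" using K assms(1) by (meson Diff_subset finite_subset subset_trans)
  have finJ: "finite J" using assms(4,1) by (rule finite_subset)
  have finU: "finite (\<Union>(A ` J))" using finJ assms(2,4) by auto
  have "card K + card J = card (K \<union> J)"
    using K finK finJ by (subst card_Un_disjoint) auto
  also have "\<dots> \<le> card (\<Union>(A ` (K \<union> J)))"
    by (intro assms(3)[unfolded hall_condition_def, rule_format]) (use K assms(4) in blast)
  also have "\<dots> = card (\<Union>((\<lambda>i. A i - \<Union>(A ` J)) ` K)) + card (\<Union>(A ` J))"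
  proof -
    have "\<Union>(A ` (K \<union> J)) = \<Union>((\<lambda>i. A i - \<Union>(A ` J)) ` K) \<union> \<Union>(A ` J)" by auto
    moreover have "finite (\<Union>((\<lambda>i. A i - \<Union>(A ` J)) ` K))" using K assms(2) finK by auto
    moreover have "\<Union>((\<lambda>i. A i - \<Union>(A ` J)) ` K) \<inter> \<Union>(A ` J) = {}" by blast
    ultimately show ?thesis using finU by (simp only: card_Un_disjoint)
  qed
  finally show "card K \<le> card (\<Union>((\<lambda>i. A i - \<Union>(A ` J)) ` K))" using critical by simp
qed

lemma hall_condition_Diff_point:
  assumes "finite I" and "\<forall>i\<in>I. finite (A i)" and "i0 \<in> I"
    and strict: "\<forall>J\<subseteq>I. J \<noteq> {} \<longrightarrow> J \<noteq> I \<longrightarrow> card J < card (\<Union>(A ` J))"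
  shows "hall_condition (I - {i0}) (\<lambda>i. A i - {x})"
  unfolding hall_condition_def
proof (intro allI impI)
  fix K assume K: "K \<subseteq> I - {i0}"
  show "card K \<le> card (\<Union>((\<lambda>i. A i - {x}) ` K))"
  proof (cases "K = {}")
    case False
    have "finite K" using K assms(1) by (meson Diff_subset finite_subset subset_trans)
    then have "finite (\<Union>(A ` K))" using K assms(2) by auto
    moreover have "card K < card (\<Union>(A ` K))" using strict K False assms(3) by blast
    moreover have "\<Union>((\<lambda>i. A i - {x}) ` K) = \<Union>(A ` K) - {x}" by auto
    moreover have "card (\<Union>(A ` K)) - 1 \<le> card (\<Union>(A ` K) - {x})"
      using diff_card_le_card_Diff[of "{x}" "\<Union>(A ` K)"] by simp
    ultimately show ?thesis by simp
  qed simp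
qed

text \<open>
  Induction on \<open>|I|\<close>: if some proper nonempty \<open>J \<subseteq> I\<close> is critical (its sets cover exactly
  \<open>|J|\<close> points), represent \<open>J\<close> and, separately, \<open>I - J\<close> with those points deleted;
  otherwise Hall's inequality is strict and any point of any \<open>A i0\<close> may represent \<open>i0\<close>.
\<close>
theorem hall_marriage:
  assumes "finite I" and "\<forall>i\<in>I. finite (A i)" and "hall_condition I A"
  shows "has_sdr I A"
  using assms
proof (induction "card I" arbitrary: I A rule: less_induct)
  case less
  note fin = less.prems(1,2) and hall = less.prems(3)
  show ?case
  proof (cases "\<exists>J\<subseteq>I. J \<noteq> {} \<and> J \<noteq> I \<and> card (\<Union>(A ` J)) = card J")
    case True
    then obtain J where J: "J \<subseteq> I" "J \<noteq> {}" "J \<noteq> I" and critical: "card (\<Union>(A ` J)) = card J"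
      by blast
    have "J \<subset> I" and "I - J \<subset> I" using J by blast+
    then have "card J < card I" and "card (I - J) < card I"
      using fin(1) by (simp_all add: psubset_card_mono)
    moreover have "finite J" using J(1) fin(1) by (rule finite_subset)
    moreover have "hall_condition J A" using hall J(1) by (rule hall_condition_subset)
    moreover have "hall_condition (I - J) (\<lambda>i. A i - \<Union>(A ` J))"
      using fin hall J(1) critical by (rule hall_condition_Diff_critical)
    ultimately have "has_sdr J A" and "has_sdr (I - J) (\<lambda>i. A i - \<Union>(A ` J))"
      using less.hyps fin J(1) by (simp_all add: subset_iff)
    have "has_sdr J (\<lambda>i. A i \<inter> \<Union>(A ` J))"
      using \<open>has_sdr J A\<close> by (auto simp: has_sdr_def)
    from has_sdr_Un[OF this \<open>has_sdr (I - J) _\<close>] show ?thesis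
      using J(1) by (simp add: Un_absorb1)
  next
    case False
    then have strict: "\<forall>J\<subseteq>I. J \<noteq> {} \<longrightarrow> J \<noteq> I \<longrightarrow> card J < card (\<Union>(A ` J))"
      using hall unfolding hall_condition_def by (metis le_neq_implies_less)
    show ?thesis
    proof (cases "I = {}")
      case True
      then show ?thesis by (simp add: has_sdr_def)
    next
      case False
      then obtain i0 where i0: "i0 \<in> I" by blast
      have "card {i0} \<le> card (A i0)"
        using hall i0 unfolding hall_condition_def by (metis empty_subsetI insert_subset
            cSup_singleton image_empty image_insert)
      then obtain x where x: "x \<in> A i0" by fastforce
      have "card (I - {i0}) < card I" using fin(1) i0 by (rule card_Diff1_less)
      moreover have "hall_condition (I - {i0}) (\<lambda>i. A i - {x})"
        using fin i0 strict by (rule hall_condition_Diff_point)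
      ultimately have rest: "has_sdr (I - {i0}) (\<lambda>i. A i - {x})"
        using less.hyps fin by simp
      have "has_sdr {i0} (\<lambda>i. A i \<inter> {x})"
        using x by (auto simp: has_sdr_def)
      from has_sdr_Un[OF this rest] have "has_sdr ({i0} \<union> (I - {i0})) A" .
      then show ?thesis using i0 by (simp add: insert_absorb)
    qed
  qed
qed

lemma sum_n_count:
  assumes "finite X" and "\<forall>S\<in>\<tau>. S \<subseteq> X \<and> card S = r"
  shows "(\<Sum>x\<in>X. n_count \<tau> x) = r * card \<tau>"
proof -
  have "finite \<tau>" using assms by (meson PowI finite_Pow_iff finite_subset subsetI)
  have "(\<Sum>x\<in>X. n_count \<tau> x) = (\<Sum>x\<in>X. \<Sum>S\<in>{S \<in> \<tau>. x \<in> S}. 1)"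
    by (simp add: n_count_def)
  also have "\<dots> = (\<Sum>S\<in>\<tau>. \<Sum>x\<in>{x \<in> X. x \<in> S}. 1)"
    by (rule sum.swap_restrict[OF assms(1) \<open>finite \<tau>\<close>])
  also have "\<dots> = (\<Sum>S\<in>\<tau>. r)"
    using assms(2) by (intro sum.cong) (auto simp: Collect_conj_eq Int_absorb1)
  finally show ?thesis by simp
qed

lemma thin_card_L:
  assumes "thin r \<tau>" and "\<tau>' \<subseteq> \<tau>" and "\<tau>' \<noteq> {}" and "r \<ge> 1"
  shows "card \<tau>' + (r - 1) \<le> card (L \<tau>')"
proof -
  have "exc r \<tau>' \<ge> 0" using assms(1-3) by (auto simp: thin_def)
  then show ?thesis using assms(4) by (simp add: exc_def)
qed

lemma thin_hall_condition:
  assumes "thin r \<tau>" and "r \<ge> 1" and "finite B" and "card B = r - 1"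
  shows "hall_condition \<tau> (\<lambda>S. S - B)"
  unfolding hall_condition_def
proof (intro allI impI)
  fix J assume J: "J \<subseteq> \<tau>"
  show "card J \<le> card (\<Union>((\<lambda>S. S - B) ` J))"
  proof (cases "J = {}")
    case False
    have "card J + card B \<le> card (L J)"
      using thin_card_L[OF assms(1) J False assms(2)] assms(4) by simp
    moreover have "card (L J) - card B \<le> card (L J - B)"
      using assms(3) by (rule diff_card_le_card_Diff)
    moreover have "\<Union>((\<lambda>S. S - B) ` J) = L J - B" by (auto simp: L_def)
    ultimately show ?thesis by simp
  qed simp
qed

theorem lemma1:
  fixes X :: "'a set" and \<tau> :: "'a set set" and n r :: nat
  assumes "finite X" and "n = card X" and "r \<ge> 2"
    and "\<tau> \<noteq> {}" and "\<tau> \<subseteq> r_subsets X r" and "L \<tau> = X"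
    and "thin r \<tau>"
  shows "int (card \<tau>) \<le> int n - int r + 1
    \<and> (\<exists>x\<in>X. n_count \<tau> x \<le> r - 1)
    \<and> (\<forall>B. B \<subseteq> X \<and> card B = r - 1 \<longrightarrow> has_sdr \<tau> (\<lambda>S. S - B))"
proof (intro conjI allI impI)
  have members: "\<forall>S\<in>\<tau>. S \<subseteq> X \<and> card S = r" using assms(5) by (auto simp: r_subsets_def)
  show card_\<tau>: "int (card \<tau>) \<le> int n - int r + 1"
    using thin_card_L[OF assms(7) order_refl assms(4)] assms(2,3,6) by simp
  show "\<exists>x\<in>X. n_count \<tau> x \<le> r - 1"
  proof (rule ccontr)
    assume "\<not> ?thesis"
    then have "(\<Sum>x\<in>X. r) \<le> (\<Sum>x\<in>X. n_count \<tau> x)"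
      by (intro sum_mono) auto
    then have "r * n \<le> (\<Sum>x\<in>X. n_count \<tau> x)" using assms(2) by (simp add: mult.commute)
    then show False using sum_n_count[OF assms(1) members] card_\<tau> assms(3) by simp
  qed
  fix B assume B: "B \<subseteq> X \<and> card B = r - 1"
  have "finite B" using B assms(1) by (meson finite_subset)
  have "finite \<tau>" using members assms(1) by (meson PowI finite_Pow_iff finite_subset subsetI)
  moreover have "\<forall>S\<in>\<tau>. finite (S - B)" using members assms(1) by (meson finite_Diff finite_subset)
  moreover have "hall_condition \<tau> (\<lambda>S. S - B)"
    using thin_hall_condition[OF assms(7) _ \<open>finite B\<close>] assms(3) B by simp
  ultimately show "has_sdr \<tau> (\<lambda>S. S - B)" by (rule hall_marriage)
qed

end
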